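(* Let $(T,[\cdot,\cdot],[\cdot,\cdot,\cdot],\alpha)$ be a Hom-Lie-Yamaguti algebra, $(\rho,D,\theta)$ a representation of $T$ on a Hom-vector space $(\mathfrak{h},\beta)$, and $(\nu,\omega)$, $(\nu',\omega')$ two (2,3)-cocycles of $T$ with coefficients in $\mathfrak{h}$. Let $T\oplus_{(\nu,\omega)}\mathfrak{h}$ denote the Hom-Lie-Yamaguti algebra on $T\oplus\mathfrak{h}$ with structure map $\alpha+\beta$ and brackets $$[x_1+u_1,x_2+u_2]_\nu=[x_1,x_2]+\nu(x_1,x_2)+\rho(x_1)(u_2)-\rho(x_2)(u_1),$$ $$[x_1+u_1,x_2+u_2,x_3+u_3]_\omega=[x_1,x_2,x_3]+\omega(x_1,x_2,x_3)+D(x_1,x_2)(u_3)-\theta(x_1,x_3)(u_2)+\theta(x_2,x_3)(u_1),$$ and similarly for $T\oplus_{(\nu',\omega')}\mathfrak{h}$. Consider the abelian extensions $0\to\mathfrak{h}\to T\oplus_{(\nu,\omega)}\mathfrak{h}\to T\to0$ and $0\to\mathfrak{h}\to T\oplus_{(\nu',\omega')}\mathfrak{h}\to T\to0$, where the maps are the inclusion $u\mapsto u$ and the projection $x+u\mapsto x$. These two extensions are equivalent if and only if $(\nu,\omega)$ and $(\nu',\omega')$ are in the same cohomology class, i.e. $(\nu-\nu',\omega-\omega')\in B^2(T,\mathfrak{h})\times B^3(T,\mathfrak{h})$.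
   Context: Throughout, vector spaces are over an algebraically closed field $\mathbb{K}$ of characteristic different from 2 and 3. A Hom-Lie-Yamaguti algebra (HLYA) is a vector space $T$ with a linear map $\alpha:T\to T$, a bilinear map $[\cdot,\cdot]$ and a trilinear map $[\cdot,\cdot,\cdot]$ on $T$ such that for all $x_i,y_i\in T$: (HLY01) $\alpha([x_1,x_2])=[\alpha(x_1),\alpha(x_2)]$; (HLY02) $\alpha([x_1,x_2,x_3])=[\alpha(x_1),\alpha(x_2),\alpha(x_3)]$; (HLY1) $[x_1,x_2]+[x_2,x_1]=0$; (HLY2) $[x_1,x_2,x_3]+[x_2,x_1,x_3]=0$; (HLY3) $\sum_{\mathrm{cyc}(x_1,x_2,x_3)}([[x_1,x_2],\alpha(x_3)]+[x_1,x_2,x_3])=0$; (HLY4) $[[x_1,x_2],\alpha(x_3),\alpha(y_1)]+[[x_2,x_3],\alpha(x_1),\alpha(y_1)]+[[x_3,x_1],\alpha(x_2),\alpha(y_1)]=0$; (HLY5) $[\alpha(x_1),\alpha(x_2),[y_1,y_2]]=[[x_1,x_2,y_1],\alpha^2(y_2)]+[\alpha^2(y_1),[x_1,x_2,y_2]]$; (HLY6) $[\alpha^2(x_1),\alpha^2(x_2),[y_1,y_2,y_3]]=[[x_1,x_2,y_1],\alpha^2(y_2),\alpha^2(y_3)]+[\alpha^2(y_1),[x_1,x_2,y_2],\alpha^2(y_3)]+[\alpha^2(y_1),\alpha^2(y_2),[x_1,x_2,y_3]]$. A homomorphism of HLYAs is a linear map intertwining the structure maps and preserving both brackets. A representation of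 $(T,\alpha)$ on $(V,\beta)$ is a linear map $\rho:T\to\mathrm{End}(V)$ and bilinear maps $D,\theta:T\times T\to\mathrm{End}(V)$ satisfying, for all $x_i,y_i\in T$: (HR01) $\rho(\alpha(x_1))\circ\beta=\beta\circ\rho(x_1)$; (HR02) $D(\alpha(x_1),\alpha(x_2))\circ\beta=\beta\circ D(x_1,x_2)$; (HR03) $\theta(\alpha(x_1),\alpha(x_2))\circ\beta=\beta\circ\theta(x_1,x_2)$; (HR31) $D(x_1,x_2)-\theta(x_2,x_1)+\theta(x_1,x_2)+\rho([x_1,x_2])\circ\beta-\rho(\alpha(x_1))\rho(x_2)+\rho(\alpha(x_2))\rho(x_1)=0$; (HR41) $D([x_1,x_2],\alpha(x_3))+D([x_2,x_3],\alpha(x_1))+D([x_3,x_1],\alpha(x_2))=0$; (HR42) $\theta([x_1,x_2],\alpha(y_1))\circ\beta=\theta(\alpha(x_1),\alpha(y_1))\rho(x_2)-\theta(\alpha(x_2),\alpha(y_1))\rho(x_1)$; (HR51) $D(\alpha(x_1),\alpha(x_2))\rho(y_2)=\rho(\alpha^2(y_2))D(x_1,x_2)+\rho([x_1,x_2,y_2])\circ\beta^2$; (HR52) $\theta(\alpha(x_1),[y_1,y_2])\circ\beta=\rho(\alpha^2(y_1))\theta(x_1,y_2)-\rho(\alpha^2(y_2))\theta(x_1,y_1)$; (HR61) $D(\alpha^2(x_1),\alpha^2(x_2))\theta(y_1,y_2)=\theta(\alpha^2(y_1),\alpha^2(y_2))D(x_1,x_2)+\theta([x_1,x_2,y_1],\alpha^2(y_2))\circ\beta^2+\theta(\alpha^2(y_1),[x_1,x_2,y_2])\circ\beta^2$;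 (HR62) $\theta(\alpha^2(x_1),[y_1,y_2,y_3])\circ\beta^2=\theta(\alpha^2(y_2),\alpha^2(y_3))\theta(x_1,y_1)-\theta(\alpha^2(y_1),\alpha^2(y_3))\theta(x_1,y_2)+D(\alpha^2(y_1),\alpha^2(y_2))\theta(x_1,y_3)$. $C^2(T,V)$: bilinear $\nu:T\times T\to V$, antisymmetric, with $\nu(\alpha(x_1),\alpha(x_2))=\beta(\nu(x_1,x_2))$ (CC01). $C^3(T,V)$: trilinear $\omega:T^3\to V$ with $\omega(x_1,x_2,x_3)=-\omega(x_2,x_1,x_3)$ and $\omega(\alpha(x_1),\alpha(x_2),\alpha(x_3))=\beta(\omega(x_1,x_2,x_3))$ (CC02). A (2,3)-cocycle is $(\nu,\omega)\in C^2\times C^3$ satisfying for all $x_i,y_i$: (CC1) $\sum_{\mathrm{cyc}(x_1,x_2,x_3)}\big(\omega(x_1,x_2,x_3)-\rho(\alpha(x_1))\nu(x_2,x_3)+\nu([x_1,x_2],\alpha(x_3))\big)=0$; (CC2) $\sum_{\mathrm{cyc}(x_1,x_2,x_3)}\big(\theta(\alpha(x_1),\alpha(y_1))\nu(x_2,x_3)+\omega([x_1,x_2],\alpha(x_3),\alpha(y_1))\big)=0$; (CC3) $\omega(\alpha(x_1),\alpha(x_2),[y_1,y_2])+D(\alpha(x_1),\alpha(x_2))\nu(y_1,y_2)=\nu([x_1,x_2,y_1],\alpha^2(y_2))+\nu(\alpha^2(y_1),[x_1,x_2,y_2])+\rho(\alpha^2(y_1))\omega(x_1,x_2,y_2)-\rho(\alpha^2(y_2))\omega(x_1,x_2,y_1)$;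 (CC4) $\omega(\alpha^2(x_1),\alpha^2(x_2),[y_1,y_2,y_3])+D(\alpha^2(x_1),\alpha^2(x_2))\omega(y_1,y_2,y_3)=\omega([x_1,x_2,y_1],\alpha^2(y_2),\alpha^2(y_3))+\omega(\alpha^2(y_1),[x_1,x_2,y_2],\alpha^2(y_3))+\omega(\alpha^2(y_1),\alpha^2(y_2),[x_1,x_2,y_3])+\theta(\alpha^2(y_2),\alpha^2(y_3))\omega(x_1,x_2,y_1)-\theta(\alpha^2(y_1),\alpha^2(y_3))\omega(x_1,x_2,y_2)+D(\alpha^2(y_1),\alpha^2(y_2))\omega(x_1,x_2,y_3)$. $B^2(T,V)\times B^3(T,V)$ is the set of pairs $(\nu,\omega)\in C^2\times C^3$ for which there is a linear $f:T\to V$ with $f\circ\alpha=\beta\circ f$, $\nu(x_1,x_2)=\rho(x_1)f(x_2)-\rho(x_2)f(x_1)-f([x_1,x_2])$ and $\omega(x_1,x_2,x_3)=\theta(x_2,x_3)f(x_1)-\theta(x_1,x_3)f(x_2)+D(x_1,x_2)f(x_3)-f([x_1,x_2,x_3])$. Two extensions $0\to\mathfrak{h}\xrightarrow{i}\hat T\xrightarrow{p}T\to0$ and $0\to\mathfrak{h}\xrightarrow{j}\tilde T\xrightarrow{q}T\to0$ of HLYAs are equivalent if there is a HLYA homomorphism $F:\hat T\to\tilde T$ with $F\circ i=j$ and $q\circ F=p$. *)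

theory Defs
  imports Main "HOL-Library.Product_Plus" "HOL-Computational_Algebra.Polynomial"
begin

definition alg_closed_field :: "'k::field itself \<Rightarrow> bool" where
  "alg_closed_field _ \<longleftrightarrow> (\<forall>p::'k poly. degree p \<ge> 1 \<longrightarrow> (\<exists>x. poly p x = 0))"

definition char_not_2_3 :: "'k::field itself \<Rightarrow> bool" where
  "char_not_2_3 _ \<longleftrightarrow> (2::'k) \<noteq> 0 \<and> (3::'k) \<noteq> 0"

definition bilinear_map ::
  "('k::field \<Rightarrow> 'a::ab_group_add \<Rightarrow> 'a) \<Rightarrow> ('k \<Rightarrow> 'b::ab_group_add \<Rightarrow> 'b) \<Rightarrow>
   ('k \<Rightarrow> 'c::ab_group_add \<Rightarrow> 'c) \<Rightarrow> ('a \<Rightarrow> 'b \<Rightarrow> 'c) \<Rightarrow> bool" where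
  "bilinear_map s1 s2 s3 f \<longleftrightarrow>
     (\<forall>x. Vector_Spaces.linear s2 s3 (f x)) \<and> (\<forall>y. Vector_Spaces.linear s1 s3 (\<lambda>x. f x y))"

definition trilinear_map ::
  "('k::field \<Rightarrow> 'a::ab_group_add \<Rightarrow> 'a) \<Rightarrow> ('k \<Rightarrow> 'c::ab_group_add \<Rightarrow> 'c) \<Rightarrow>
   ('a \<Rightarrow> 'a \<Rightarrow> 'a \<Rightarrow> 'c) \<Rightarrow> bool" where
  "trilinear_map s1 s2 f \<longleftrightarrow>
     (\<forall>x y. Vector_Spaces.linear s1 s2 (f x y)) \<and>
     (\<forall>x z. Vector_Spaces.linear s1 s2 (\<lambda>y. f x y z)) \<and>
     (\<forall>y z. Vector_Spaces.linear s1 s2 (\<lambda>x. f x y z))"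

definition HLYA ::
  "('k::field \<Rightarrow> 't::ab_group_add \<Rightarrow> 't) \<Rightarrow> ('t \<Rightarrow> 't) \<Rightarrow> ('t \<Rightarrow> 't \<Rightarrow> 't) \<Rightarrow>
   ('t \<Rightarrow> 't \<Rightarrow> 't \<Rightarrow> 't) \<Rightarrow> bool" where
  "HLYA s al br tr \<longleftrightarrow>
     Vector_Spaces.linear s s al \<and> bilinear_map s s s br \<and> trilinear_map s s tr \<and>
     (\<forall>x1 x2 x3 y1 y2 y3.
        al (br x1 x2) = br (al x1) (al x2) \<and>
        al (tr x1 x2 x3) = tr (al x1) (al x2) (al x3) \<and>
        br x1 x2 + br x2 x1 = 0 \<and>
        tr x1 x2 x3 + tr x2 x1 x3 = 0 \<and>
        (br (br x1 x2) (al x3) + tr x1 x2 x3) + (br (br x2 x3) (al x1) + tr x2 x3 x1)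
          + (br (br x3 x1) (al x2) + tr x3 x1 x2) = 0 \<and>
        tr (br x1 x2) (al x3) (al y1) + tr (br x2 x3) (al x1) (al y1)
          + tr (br x3 x1) (al x2) (al y1) = 0 \<and>
        tr (al x1) (al x2) (br y1 y2) =
          br (tr x1 x2 y1) (al (al y2)) + br (al (al y1)) (tr x1 x2 y2) \<and>
        tr (al (al x1)) (al (al x2)) (tr y1 y2 y3) =
          tr (tr x1 x2 y1) (al (al y2)) (al (al y3))
          + tr (al (al y1)) (tr x1 x2 y2) (al (al y3))
          + tr (al (al y1)) (al (al y2)) (tr x1 x2 y3))"

definition HLYA_hom ::
  "('k::field \<Rightarrow> 'a::ab_group_add \<Rightarrow> 'a) \<Rightarrow> ('a \<Rightarrow> 'a) \<Rightarrow> ('a \<Rightarrow> 'a \<Rightarrow> 'a) \<Rightarrow>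
   ('a \<Rightarrow> 'a \<Rightarrow> 'a \<Rightarrow> 'a) \<Rightarrow>
   ('k \<Rightarrow> 'b::ab_group_add \<Rightarrow> 'b) \<Rightarrow> ('b \<Rightarrow> 'b) \<Rightarrow> ('b \<Rightarrow> 'b \<Rightarrow> 'b) \<Rightarrow>
   ('b \<Rightarrow> 'b \<Rightarrow> 'b \<Rightarrow> 'b) \<Rightarrow> ('a \<Rightarrow> 'b) \<Rightarrow> bool" where
  "HLYA_hom sA alA brA trA sB alB brB trB F \<longleftrightarrow>
     Vector_Spaces.linear sA sB F \<and>
     (\<forall>x. F (alA x) = alB (F x)) \<and>
     (\<forall>x y. F (brA x y) = brB (F x) (F y)) \<and>
     (\<forall>x y z. F (trA x y z) = trB (F x) (F y) (F z))"

definition HLYA_rep ::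
  "('k::field \<Rightarrow> 't::ab_group_add \<Rightarrow> 't) \<Rightarrow> ('t \<Rightarrow> 't) \<Rightarrow> ('t \<Rightarrow> 't \<Rightarrow> 't) \<Rightarrow>
   ('t \<Rightarrow> 't \<Rightarrow> 't \<Rightarrow> 't) \<Rightarrow> ('k \<Rightarrow> 'v::ab_group_add \<Rightarrow> 'v) \<Rightarrow> ('v \<Rightarrow> 'v) \<Rightarrow>
   ('t \<Rightarrow> 'v \<Rightarrow> 'v) \<Rightarrow> ('t \<Rightarrow> 't \<Rightarrow> 'v \<Rightarrow> 'v) \<Rightarrow> ('t \<Rightarrow> 't \<Rightarrow> 'v \<Rightarrow> 'v) \<Rightarrow> bool" where
  "HLYA_rep sT al br tr sV be rho D th \<longleftrightarrow>
     Vector_Spaces.linear sV sV be \<and>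
     (\<forall>x. Vector_Spaces.linear sV sV (rho x)) \<and>
     (\<forall>u. Vector_Spaces.linear sT sV (\<lambda>x. rho x u)) \<and>
     (\<forall>x y. Vector_Spaces.linear sV sV (D x y)) \<and>
     (\<forall>u. bilinear_map sT sT sV (\<lambda>x y. D x y u)) \<and>
     (\<forall>x y. Vector_Spaces.linear sV sV (th x y)) \<and>
     (\<forall>u. bilinear_map sT sT sV (\<lambda>x y. th x y u)) \<and>
     (\<forall>x1 x2 x3 y1 y2 y3 u.
        rho (al x1) (be u) = be (rho x1 u) \<and>
        D (al x1) (al x2) (be u) = be (D x1 x2 u) \<and>
        th (al x1) (al x2) (be u) = be (th x1 x2 u) \<and>
        D x1 x2 u - th x2 x1 u + th x1 x2 u + rho (br x1 x2) (be u)
          - rho (al x1) (rho x2 u) + rho (al x2) (rho x1 u) = 0 \<and>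
        D (br x1 x2) (al x3) u + D (br x2 x3) (al x1) u + D (br x3 x1) (al x2) u = 0 \<and>
        th (br x1 x2) (al y1) (be u) =
          th (al x1) (al y1) (rho x2 u) - th (al x2) (al y1) (rho x1 u) \<and>
        D (al x1) (al x2) (rho y2 u) =
          rho (al (al y2)) (D x1 x2 u) + rho (tr x1 x2 y2) (be (be u)) \<and>
        th (al x1) (br y1 y2) (be u) =
          rho (al (al y1)) (th x1 y2 u) - rho (al (al y2)) (th x1 y1 u) \<and>
        D (al (al x1)) (al (al x2)) (th y1 y2 u) =
          th (al (al y1)) (al (al y2)) (D x1 x2 u)
          + th (tr x1 x2 y1) (al (al y2)) (be (be u))
          + th (al (al y1)) (tr x1 x2 y2) (be (be u)) \<and>
        th (al (al x1)) (tr y1 y2 y3) (be (be u)) =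
          th (al (al y2)) (al (al y3)) (th x1 y1 u)
          - th (al (al y1)) (al (al y3)) (th x1 y2 u)
          + D (al (al y1)) (al (al y2)) (th x1 y3 u))"

definition C2 ::
  "('k::field \<Rightarrow> 't::ab_group_add \<Rightarrow> 't) \<Rightarrow> ('t \<Rightarrow> 't) \<Rightarrow> ('k \<Rightarrow> 'v::ab_group_add \<Rightarrow> 'v) \<Rightarrow>
   ('v \<Rightarrow> 'v) \<Rightarrow> ('t \<Rightarrow> 't \<Rightarrow> 'v) \<Rightarrow> bool" where
  "C2 sT al sV be nu \<longleftrightarrow> bilinear_map sT sT sV nu \<and>
     (\<forall>x1 x2. nu x1 x2 = - nu x2 x1) \<and>
     (\<forall>x1 x2. nu (al x1) (al x2) = be (nu x1 x2))"

definition C3 ::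
  "('k::field \<Rightarrow> 't::ab_group_add \<Rightarrow> 't) \<Rightarrow> ('t \<Rightarrow> 't) \<Rightarrow> ('k \<Rightarrow> 'v::ab_group_add \<Rightarrow> 'v) \<Rightarrow>
   ('v \<Rightarrow> 'v) \<Rightarrow> ('t \<Rightarrow> 't \<Rightarrow> 't \<Rightarrow> 'v) \<Rightarrow> bool" where
  "C3 sT al sV be om \<longleftrightarrow> trilinear_map sT sV om \<and>
     (\<forall>x1 x2 x3. om x1 x2 x3 = - om x2 x1 x3) \<and>
     (\<forall>x1 x2 x3. om (al x1) (al x2) (al x3) = be (om x1 x2 x3))"

definition cocycle23 ::
  "('k::field \<Rightarrow> 't::ab_group_add \<Rightarrow> 't) \<Rightarrow> ('t \<Rightarrow> 't) \<Rightarrow> ('t \<Rightarrow> 't \<Rightarrow> 't) \<Rightarrow>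
   ('t \<Rightarrow> 't \<Rightarrow> 't \<Rightarrow> 't) \<Rightarrow> ('k \<Rightarrow> 'v::ab_group_add \<Rightarrow> 'v) \<Rightarrow> ('v \<Rightarrow> 'v) \<Rightarrow>
   ('t \<Rightarrow> 'v \<Rightarrow> 'v) \<Rightarrow> ('t \<Rightarrow> 't \<Rightarrow> 'v \<Rightarrow> 'v) \<Rightarrow> ('t \<Rightarrow> 't \<Rightarrow> 'v \<Rightarrow> 'v) \<Rightarrow>
   ('t \<Rightarrow> 't \<Rightarrow> 'v) \<Rightarrow> ('t \<Rightarrow> 't \<Rightarrow> 't \<Rightarrow> 'v) \<Rightarrow> bool" where
  "cocycle23 sT al br tr sV be rho D th nu om \<longleftrightarrow>
     C2 sT al sV be nu \<and> C3 sT al sV be om \<and>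
     (\<forall>x1 x2 x3 y1 y2 y3.
        (om x1 x2 x3 - rho (al x1) (nu x2 x3) + nu (br x1 x2) (al x3))
        + (om x2 x3 x1 - rho (al x2) (nu x3 x1) + nu (br x2 x3) (al x1))
        + (om x3 x1 x2 - rho (al x3) (nu x1 x2) + nu (br x3 x1) (al x2)) = 0 \<and>
        (th (al x1) (al y1) (nu x2 x3) + om (br x1 x2) (al x3) (al y1))
        + (th (al x2) (al y1) (nu x3 x1) + om (br x2 x3) (al x1) (al y1))
        + (th (al x3) (al y1) (nu x1 x2) + om (br x3 x1) (al x2) (al y1)) = 0 \<and>
        om (al x1) (al x2) (br y1 y2) + D (al x1) (al x2) (nu y1 y2) =
          nu (tr x1 x2 y1) (al (al y2)) + nu (al (al y1)) (tr x1 x2 y2)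
          + rho (al (al y1)) (om x1 x2 y2) - rho (al (al y2)) (om x1 x2 y1) \<and>
        om (al (al x1)) (al (al x2)) (tr y1 y2 y3) + D (al (al x1)) (al (al x2)) (om y1 y2 y3) =
          om (tr x1 x2 y1) (al (al y2)) (al (al y3))
          + om (al (al y1)) (tr x1 x2 y2) (al (al y3))
          + om (al (al y1)) (al (al y2)) (tr x1 x2 y3)
          + th (al (al y2)) (al (al y3)) (om x1 x2 y1)
          - th (al (al y1)) (al (al y3)) (om x1 x2 y2)
          + D (al (al y1)) (al (al y2)) (om x1 x2 y3))"

definition coboundary23 ::
  "('k::field \<Rightarrow> 't::ab_group_add \<Rightarrow> 't) \<Rightarrow> ('t \<Rightarrow> 't) \<Rightarrow> ('t \<Rightarrow> 't \<Rightarrow> 't) \<Rightarrow>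
   ('t \<Rightarrow> 't \<Rightarrow> 't \<Rightarrow> 't) \<Rightarrow> ('k \<Rightarrow> 'v::ab_group_add \<Rightarrow> 'v) \<Rightarrow> ('v \<Rightarrow> 'v) \<Rightarrow>
   ('t \<Rightarrow> 'v \<Rightarrow> 'v) \<Rightarrow> ('t \<Rightarrow> 't \<Rightarrow> 'v \<Rightarrow> 'v) \<Rightarrow> ('t \<Rightarrow> 't \<Rightarrow> 'v \<Rightarrow> 'v) \<Rightarrow>
   ('t \<Rightarrow> 't \<Rightarrow> 'v) \<Rightarrow> ('t \<Rightarrow> 't \<Rightarrow> 't \<Rightarrow> 'v) \<Rightarrow> bool" where
  "coboundary23 sT al br tr sV be rho D th nu om \<longleftrightarrow>
     C2 sT al sV be nu \<and> C3 sT al sV be om \<and>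
     (\<exists>f. Vector_Spaces.linear sT sV f \<and> (\<forall>x. f (al x) = be (f x)) \<and>
        (\<forall>x1 x2. nu x1 x2 = rho x1 (f x2) - rho x2 (f x1) - f (br x1 x2)) \<and>
        (\<forall>x1 x2 x3. om x1 x2 x3 =
           th x2 x3 (f x1) - th x1 x3 (f x2) + D x1 x2 (f x3) - f (tr x1 x2 x3)))"

definition prod_scale ::
  "('k \<Rightarrow> 't \<Rightarrow> 't) \<Rightarrow> ('k \<Rightarrow> 'v \<Rightarrow> 'v) \<Rightarrow> 'k \<Rightarrow> 't \<times> 'v \<Rightarrow> 't \<times> 'v" where
  "prod_scale sT sV c p = (sT c (fst p), sV c (snd p))"

definition sd_alpha :: "('t \<Rightarrow> 't) \<Rightarrow> ('v \<Rightarrow> 'v) \<Rightarrow> 't \<times> 'v \<Rightarrow> 't \<times> 'v" where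
  "sd_alpha al be p = (al (fst p), be (snd p))"

definition sd_br ::
  "('t \<Rightarrow> 't \<Rightarrow> 't) \<Rightarrow> ('t \<Rightarrow> 'v \<Rightarrow> 'v) \<Rightarrow> ('t \<Rightarrow> 't \<Rightarrow> 'v::ab_group_add) \<Rightarrow>
   't \<times> 'v \<Rightarrow> 't \<times> 'v \<Rightarrow> 't \<times> 'v" where
  "sd_br br rho nu p q =
     (br (fst p) (fst q), nu (fst p) (fst q) + rho (fst p) (snd q) - rho (fst q) (snd p))"

definition sd_tr ::
  "('t \<Rightarrow> 't \<Rightarrow> 't \<Rightarrow> 't) \<Rightarrow> ('t \<Rightarrow> 't \<Rightarrow> 'v \<Rightarrow> 'v) \<Rightarrow> ('t \<Rightarrow> 't \<Rightarrow> 'v \<Rightarrow> 'v) \<Rightarrow>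
   ('t \<Rightarrow> 't \<Rightarrow> 't \<Rightarrow> 'v::ab_group_add) \<Rightarrow> 't \<times> 'v \<Rightarrow> 't \<times> 'v \<Rightarrow> 't \<times> 'v \<Rightarrow> 't \<times> 'v" where
  "sd_tr tr D th om p q r =
     (tr (fst p) (fst q) (fst r),
      om (fst p) (fst q) (fst r) + D (fst p) (fst q) (snd r)
        - th (fst p) (fst r) (snd q) + th (fst q) (fst r) (snd p))"

definition ext_equiv ::
  "('k::field \<Rightarrow> 'a::ab_group_add \<Rightarrow> 'a) \<Rightarrow> ('a \<Rightarrow> 'a) \<Rightarrow> ('a \<Rightarrow> 'a \<Rightarrow> 'a) \<Rightarrow>
   ('a \<Rightarrow> 'a \<Rightarrow> 'a \<Rightarrow> 'a) \<Rightarrow> ('h \<Rightarrow> 'a) \<Rightarrow> ('a \<Rightarrow> 't) \<Rightarrow>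
   ('k \<Rightarrow> 'b::ab_group_add \<Rightarrow> 'b) \<Rightarrow> ('b \<Rightarrow> 'b) \<Rightarrow> ('b \<Rightarrow> 'b \<Rightarrow> 'b) \<Rightarrow>
   ('b \<Rightarrow> 'b \<Rightarrow> 'b \<Rightarrow> 'b) \<Rightarrow> ('h \<Rightarrow> 'b) \<Rightarrow> ('b \<Rightarrow> 't) \<Rightarrow> bool" where
  "ext_equiv sA alA brA trA i p sB alB brB trB j q \<longleftrightarrow>
     (\<exists>F. HLYA_hom sA alA brA trA sB alB brB trB F \<and> F \<circ> i = j \<and> q \<circ> F = p)"

end

theory Submission
  imports Defs
begin

text \<open>An equivalence F of the two extensions fixes the fibre inclusion and commutes with the
  projection, so by additivity it is a shear F(x, u) = (x, u + f x) for a linear f : T \<rightarrow> h.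
  Comparing F applied to the twisted brackets with the twisted brackets of the images shows that
  F preserves the structure map and the brackets exactly when f commutes with the structure maps
  and (\<nu> - \<nu>', \<omega> - \<omega>') is the coboundary of f. Only the linearity of the data enters.\<close>

lemmas linear_map_add = module_hom.add[OF Vector_Spaces.linear.axioms(3)]
lemmas linear_map_zero = module_hom.zero[OF Vector_Spaces.linear.axioms(3)]
lemmas linear_map_diff = module_hom.diff[OF Vector_Spaces.linear.axioms(3)]
lemmas linear_map_scale = module_hom.scale[OF Vector_Spaces.linear.axioms(3)]

lemma linear_map_fun_diff:
  assumes "Vector_Spaces.linear s1 s2 f" "Vector_Spaces.linear s1 s2 g"
  shows "Vector_Spaces.linear s1 s2 (\<lambda>x. f x - g x)"
proof -
  have "module_pair s1 s2"
    using assms(1) by (simp add: module_pair_def module_iff_vector_space Vector_Spaces.linear_iff)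
  then show ?thesis
    using assms module_pair.module_hom_sub by (simp add: module_hom_iff_linear[symmetric])
qed

lemma bilinear_map_diff:
  "bilinear_map s1 s2 s3 f \<Longrightarrow> bilinear_map s1 s2 s3 g \<Longrightarrow>
   bilinear_map s1 s2 s3 (\<lambda>x y. f x y - g x y)"
  unfolding bilinear_map_def by (auto intro: linear_map_fun_diff)

lemma trilinear_map_diff:
  "trilinear_map s1 s2 f \<Longrightarrow> trilinear_map s1 s2 g \<Longrightarrow>
   trilinear_map s1 s2 (\<lambda>x y z. f x y z - g x y z)"
  unfolding trilinear_map_def by (auto intro: linear_map_fun_diff)

lemma C2_diff:
  assumes "C2 sT al sV be nu" "C2 sT al sV be nu'" "Vector_Spaces.linear sV sV be"
  shows "C2 sT al sV be (\<lambda>x y. nu x y - nu' x y)"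
  unfolding C2_def
proof (intro conjI allI)
  show "bilinear_map sT sT sV (\<lambda>x y. nu x y - nu' x y)"
    using assms(1,2) unfolding C2_def by (blast intro: bilinear_map_diff)
  fix x y
  have "nu x y = - nu y x" "nu' x y = - nu' y x"
    using assms(1,2) unfolding C2_def by blast+
  then show "nu x y - nu' x y = - (nu y x - nu' y x)"
    by simp
  have "nu (al x) (al y) = be (nu x y)" "nu' (al x) (al y) = be (nu' x y)"
    using assms(1,2) unfolding C2_def by blast+
  then show "nu (al x) (al y) - nu' (al x) (al y) = be (nu x y - nu' x y)"
    by (simp add: linear_map_diff[OF assms(3)])
qed

lemma C3_diff:
  assumes "C3 sT al sV be om" "C3 sT al sV be om'" "Vector_Spaces.linear sV sV be"
  shows "C3 sT al sV be (\<lambda>x y z. om x y z - om' x y z)"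
  unfolding C3_def
proof (intro conjI allI)
  show "trilinear_map sT sV (\<lambda>x y z. om x y z - om' x y z)"
    using assms(1,2) unfolding C3_def by (blast intro: trilinear_map_diff)
  fix x y z
  have "om x y z = - om y x z" "om' x y z = - om' y x z"
    using assms(1,2) unfolding C3_def by blast+
  then show "om x y z - om' x y z = - (om y x z - om' y x z)"
    by simp
  have "om (al x) (al y) (al z) = be (om x y z)" "om' (al x) (al y) (al z) = be (om' x y z)"
    using assms(1,2) unfolding C3_def by blast+
  then show "om (al x) (al y) (al z) - om' (al x) (al y) (al z) = be (om x y z - om' x y z)"
    by (simp add: linear_map_diff[OF assms(3)])
qed

lemma vector_space_prod_scale:
  "vector_space sT \<Longrightarrow> vector_space sV \<Longrightarrow> vector_space (prod_scale sT sV)"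
  unfolding vector_space_def prod_scale_def by auto

definition shear :: "('t \<Rightarrow> 'v) \<Rightarrow> 't \<times> 'v \<Rightarrow> 't \<times> 'v::plus" where
  "shear f p = (fst p, snd p + f (fst p))"

lemma shear_apply [simp]: "shear f (x, u) = (x, u + f x)"
  by (simp add: shear_def)

lemma extension_morphism_is_shear:
  fixes F :: "'t::ab_group_add \<times> 'v::ab_group_add \<Rightarrow> 't \<times> 'v"
  assumes "Vector_Spaces.linear (prod_scale sT sV) (prod_scale sT sV) F"
    and "F \<circ> (\<lambda>u. (0, u)) = (\<lambda>u. (0, u))" and "fst \<circ> F = fst"
  shows "F = shear (\<lambda>x. snd (F (x, 0)))"
proof (rule ext)
  fix p :: "'t \<times> 'v"
  obtain x u where p: "p = (x, u)"
    by fastforce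
  have "F (x, u) = F (x, 0) + F (0, u)"
    using linear_map_add[OF assms(1), of "(x, 0)" "(0, u)"] by simp
  also have "F (0, u) = (0, u)"
    using fun_cong[OF assms(2), of u] by simp
  also have "F (x, 0) = (x, snd (F (x, 0)))"
    using fun_cong[OF assms(3), of "(x, 0)"] by (simp add: prod_eq_iff)
  finally show "F p = shear (\<lambda>x. snd (F (x, 0))) p"
    by (simp add: p add.commute)
qed

lemma linear_shear_iff:
  assumes "vector_space sT" "vector_space sV"
  shows "Vector_Spaces.linear (prod_scale sT sV) (prod_scale sT sV) (shear f)
     \<longleftrightarrow> Vector_Spaces.linear sT sV f"
proof
  assume lin: "Vector_Spaces.linear (prod_scale sT sV) (prod_scale sT sV) (shear f)"
  have "module sV"
    using assms(2) by (simp add: module_iff_vector_space)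
  have "f (x + y) = f x + f y" for x y
    using linear_map_add[OF lin, of "(x, 0)" "(y, 0)"] by simp
  moreover have "f (sT c x) = sV c (f x)" for c x
    using linear_map_scale[OF lin, of c "(x, 0)"] module.scale_zero_right[OF \<open>module sV\<close>]
    by (simp add: prod_scale_def)
  ultimately show "Vector_Spaces.linear sT sV f"
    using assms by (simp add: Vector_Spaces.linear_iff)
next
  assume lin: "Vector_Spaces.linear sT sV f"
  show "Vector_Spaces.linear (prod_scale sT sV) (prod_scale sT sV) (shear f)"
    using assms vector_space_prod_scale[OF assms]
    by (auto simp: Vector_Spaces.linear_iff shear_def prod_scale_def linear_map_add[OF lin]
        linear_map_scale[OF lin] module.scale_right_distrib module_iff_vector_space)
qed

lemma shear_sd_alpha_iff:
  assumes "Vector_Spaces.linear sV sV be"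
  shows "(\<forall>p. shear f (sd_alpha al be p) = sd_alpha al be (shear f p))
     \<longleftrightarrow> (\<forall>x. f (al x) = be (f x))"
  using assms by (auto simp: shear_def sd_alpha_def linear_map_add)

lemma shear_sd_br_iff:
  fixes nu nu' :: "'t \<Rightarrow> 't \<Rightarrow> 'v::ab_group_add"
  assumes "\<And>x. Vector_Spaces.linear sV sV (rho x)"
  shows "(\<forall>p q. shear f (sd_br br rho nu p q) = sd_br br rho nu' (shear f p) (shear f q))
     \<longleftrightarrow> (\<forall>x y. nu x y - nu' x y = rho x (f y) - rho y (f x) - f (br x y))"
proof -
  have pointwise: "shear f (sd_br br rho nu p q) = sd_br br rho nu' (shear f p) (shear f q)
    \<longleftrightarrow> nu (fst p) (fst q) - nu' (fst p) (fst q)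
      = rho (fst p) (f (fst q)) - rho (fst q) (f (fst p)) - f (br (fst p) (fst q))" for p q
    \<comment> \<open>both equations become X = 0 with the same X, which algebra_simps normalises\<close>
    by (cases p; cases q; simp add: sd_br_def linear_map_add[OF assms])
      (subst (1 2) eq_iff_diff_eq_0, simp add: algebra_simps)
  show ?thesis
    by (simp only: pointwise split_paired_All fst_conv) simp
qed

lemma shear_sd_tr_iff:
  fixes om om' :: "'t \<Rightarrow> 't \<Rightarrow> 't \<Rightarrow> 'v::ab_group_add"
  assumes "\<And>x y. Vector_Spaces.linear sV sV (D x y)" "\<And>x y. Vector_Spaces.linear sV sV (th x y)"
  shows "(\<forall>p q r. shear f (sd_tr tr D th om p q r)
            = sd_tr tr D th om' (shear f p) (shear f q) (shear f r))
     \<longleftrightarrow> (\<forall>x y z. om x y z - om' x y z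
            = th y z (f x) - th x z (f y) + D x y (f z) - f (tr x y z))"
proof -
  have pointwise: "shear f (sd_tr tr D th om p q r)
      = sd_tr tr D th om' (shear f p) (shear f q) (shear f r)
    \<longleftrightarrow> om (fst p) (fst q) (fst r) - om' (fst p) (fst q) (fst r)
      = th (fst q) (fst r) (f (fst p)) - th (fst p) (fst r) (f (fst q))
        + D (fst p) (fst q) (f (fst r)) - f (tr (fst p) (fst q) (fst r))" for p q r
    by (cases p; cases q; cases r;
        simp add: sd_tr_def linear_map_add[OF assms(1)] linear_map_add[OF assms(2)])
      (subst (1 2) eq_iff_diff_eq_0, simp add: algebra_simps)
  show ?thesis
    by (simp only: pointwise split_paired_All fst_conv) simp
qed

lemma HLYA_hom_shear_iff:
  assumes "vector_space sT" "vector_space sV" "Vector_Spaces.linear sV sV be"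
    and "\<And>x. Vector_Spaces.linear sV sV (rho x)"
    and "\<And>x y. Vector_Spaces.linear sV sV (D x y)" "\<And>x y. Vector_Spaces.linear sV sV (th x y)"
  shows "HLYA_hom (prod_scale sT sV) (sd_alpha al be) (sd_br br rho nu) (sd_tr tr D th om)
           (prod_scale sT sV) (sd_alpha al be) (sd_br br rho nu') (sd_tr tr D th om') (shear f)
     \<longleftrightarrow> Vector_Spaces.linear sT sV f \<and> (\<forall>x. f (al x) = be (f x))
       \<and> (\<forall>x y. nu x y - nu' x y = rho x (f y) - rho y (f x) - f (br x y))
       \<and> (\<forall>x y z. om x y z - om' x y z
            = th y z (f x) - th x z (f y) + D x y (f z) - f (tr x y z))"
  unfolding HLYA_hom_def
  by (simp only: linear_shear_iff[OF assms(1,2)] shear_sd_alpha_iff[OF assms(3)]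
      shear_sd_br_iff[OF assms(4)] shear_sd_tr_iff[OF assms(5,6)])

lemma ext_equiv_semidirect_iff:
  fixes brA brB :: "'t::ab_group_add \<times> 'v::ab_group_add \<Rightarrow> 't \<times> 'v \<Rightarrow> 't \<times> 'v"
  shows "ext_equiv (prod_scale sT sV) (sd_alpha al be) brA trA (\<lambda>u. (0, u)) fst
           (prod_scale sT sV) (sd_alpha al be) brB trB (\<lambda>u. (0, u)) fst
     \<longleftrightarrow> (\<exists>f. HLYA_hom (prod_scale sT sV) (sd_alpha al be) brA trA
                (prod_scale sT sV) (sd_alpha al be) brB trB (shear f))"
proof
  assume "ext_equiv (prod_scale sT sV) (sd_alpha al be) brA trA (\<lambda>u. (0, u)) fst
    (prod_scale sT sV) (sd_alpha al be) brB trB (\<lambda>u. (0, u)) fst"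
  then obtain F where hom: "HLYA_hom (prod_scale sT sV) (sd_alpha al be) brA trA
      (prod_scale sT sV) (sd_alpha al be) brB trB F"
    and "F \<circ> (\<lambda>u. (0, u)) = (\<lambda>u. (0, u))" "fst \<circ> F = fst"
    unfolding ext_equiv_def by blast
  moreover have "Vector_Spaces.linear (prod_scale sT sV) (prod_scale sT sV) F"
    using hom unfolding HLYA_hom_def by blast
  ultimately have "F = shear (\<lambda>x. snd (F (x, 0)))"
    by (intro extension_morphism_is_shear)
  with hom show "\<exists>f. HLYA_hom (prod_scale sT sV) (sd_alpha al be) brA trA
      (prod_scale sT sV) (sd_alpha al be) brB trB (shear f)"
    by metis
next
  assume "\<exists>f. HLYA_hom (prod_scale sT sV) (sd_alpha al be) brA trA
    (prod_scale sT sV) (sd_alpha al be) brB trB (shear f)"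
  then obtain f where hom: "HLYA_hom (prod_scale sT sV) (sd_alpha al be) brA trA
      (prod_scale sT sV) (sd_alpha al be) brB trB (shear f)"
    by blast
  then have "shear f 0 = 0"
    unfolding HLYA_hom_def using linear_map_zero by blast
  then have "f 0 = 0"
    by (simp add: shear_def zero_prod_def)
  then have "shear f \<circ> (\<lambda>u. (0, u)) = (\<lambda>u. (0, u))" "fst \<circ> shear f = fst"
    by (simp_all add: fun_eq_iff shear_def)
  with hom show "ext_equiv (prod_scale sT sV) (sd_alpha al be) brA trA (\<lambda>u. (0, u)) fst
    (prod_scale sT sV) (sd_alpha al be) brB trB (\<lambda>u. (0, u)) fst"
    unfolding ext_equiv_def by blast
qed

theorem lemma4p6:
  fixes sT :: "'k::field \<Rightarrow> 't::ab_group_add \<Rightarrow> 't"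
    and sV :: "'k \<Rightarrow> 'v::ab_group_add \<Rightarrow> 'v"
    and al :: "'t \<Rightarrow> 't" and br :: "'t \<Rightarrow> 't \<Rightarrow> 't" and tr :: "'t \<Rightarrow> 't \<Rightarrow> 't \<Rightarrow> 't"
    and be :: "'v \<Rightarrow> 'v"
    and rho :: "'t \<Rightarrow> 'v \<Rightarrow> 'v" and D th :: "'t \<Rightarrow> 't \<Rightarrow> 'v \<Rightarrow> 'v"
    and nu nu' :: "'t \<Rightarrow> 't \<Rightarrow> 'v" and om om' :: "'t \<Rightarrow> 't \<Rightarrow> 't \<Rightarrow> 'v"
  assumes "alg_closed_field TYPE('k)" and "char_not_2_3 TYPE('k)"
    and "vector_space sT" and "vector_space sV"
    and "HLYA sT al br tr"
    and "HLYA_rep sT al br tr sV be rho D th"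
    and "cocycle23 sT al br tr sV be rho D th nu om"
    and "cocycle23 sT al br tr sV be rho D th nu' om'"
  shows "ext_equiv (prod_scale sT sV) (sd_alpha al be) (sd_br br rho nu) (sd_tr tr D th om)
            (\<lambda>u. (0, u)) fst
          (prod_scale sT sV) (sd_alpha al be) (sd_br br rho nu') (sd_tr tr D th om')
            (\<lambda>u. (0, u)) fst
     \<longleftrightarrow> coboundary23 sT al br tr sV be rho D th
            (\<lambda>x y. nu x y - nu' x y) (\<lambda>x y z. om x y z - om' x y z)"
proof -
  have be: "Vector_Spaces.linear sV sV be"
    and rho: "\<And>x. Vector_Spaces.linear sV sV (rho x)"
    and D: "\<And>x y. Vector_Spaces.linear sV sV (D x y)"
    and th: "\<And>x y. Vector_Spaces.linear sV sV (th x y)"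
    using assms(6) unfolding HLYA_rep_def by blast+
  have cochains: "C2 sT al sV be (\<lambda>x y. nu x y - nu' x y)"
      "C3 sT al sV be (\<lambda>x y z. om x y z - om' x y z)"
    using assms(7,8) C2_diff[OF _ _ be] C3_diff[OF _ _ be] unfolding cocycle23_def by blast+
  have "ext_equiv (prod_scale sT sV) (sd_alpha al be) (sd_br br rho nu) (sd_tr tr D th om)
          (\<lambda>u. (0, u)) fst
        (prod_scale sT sV) (sd_alpha al be) (sd_br br rho nu') (sd_tr tr D th om')
          (\<lambda>u. (0, u)) fst
    \<longleftrightarrow> (\<exists>f. HLYA_hom (prod_scale sT sV) (sd_alpha al be) (sd_br br rho nu) (sd_tr tr D th om)
          (prod_scale sT sV) (sd_alpha al be) (sd_br br rho nu') (sd_tr tr D th om') (shear f))"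
    by (rule ext_equiv_semidirect_iff)
  also have "\<dots> \<longleftrightarrow> coboundary23 sT al br tr sV be rho D th
          (\<lambda>x y. nu x y - nu' x y) (\<lambda>x y z. om x y z - om' x y z)"
    unfolding HLYA_hom_shear_iff[OF assms(3,4) be rho D th] coboundary23_def
    using cochains by blast
  finally show ?thesis .
qed

end
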